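(* Let $G=(V,E,w)$ be an edge-weighted graph with positive rational weights, no isolated vertices and maximum degree $\Delta$. The greedy algorithm applied to $U=V$ and the function $g(A)=h(A)+\frac1L f(A)$ returns a WPPITDS $S$ with $$|S|\le\Big(1+\ln\big(\tfrac32\cdot L\cdot W+\Delta\big)\Big)\cdot|S^*|,$$ where $S^*$ is a minimum-cardinality WPPITDS.
   Context: $N_A(v)=N(v)\cap A$, $W_A(v)=\sum_{u\in N_A(v)}w_{(v,u)}$, $W(v)=W_V(v)$, $W=\max_v W(v)$. $h(A)=\sum_{v\in V}h_A(v)$ with $h_A(v)=W(v)/2$ if $v\in A$ or $W_A(v)\ge W(v)/2$, and $h_A(v)=W_A(v)$ otherwise. $f(A)=\sum_{v\in V}\delta_A(v)$ with $\delta_A(v)=1$ if $|N_A(v)|>0$ and $0$ otherwise. For $v$ with incident edge weights $w_1,\dots,w_d$, write $w_0=W(v)/2$ and each $w_i$ as a reduced fraction $p_i/q_i$; $l(v)=\mathrm{lcm}\{q_0,\dots,q_d\}$, $L=\max_v l(v)$. The greedy algorithm: start with $S=\emptyset$; while some $u\in V\setminus S$ has $g(S\cup\{u\})-g(S)>0$, add to $S$ an element maximizing this increment (ties arbitrary); return $S$. A WPPITDS is a set $S\subseteq V$ such that every $v\in V\setminus S$ satisfies $W_S(v)\ge W(v)/2$ and every vertex of $S$ has at least one neighbor in $S$. *)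

theory Defs
  imports Complex_Main
begin

definition wgraph :: "'a set \<Rightarrow> ('a \<Rightarrow> 'a \<Rightarrow> bool) \<Rightarrow> ('a \<Rightarrow> 'a \<Rightarrow> rat) \<Rightarrow> bool" where
  "wgraph V E w \<longleftrightarrow> finite V
     \<and> (\<forall>u v. E u v \<longrightarrow> u \<in> V \<and> v \<in> V)
     \<and> (\<forall>u v. E u v \<longrightarrow> E v u)
     \<and> (\<forall>v. \<not> E v v)
     \<and> (\<forall>u v. E u v \<longrightarrow> w u v = w v u \<and> w u v > 0)"

definition no_isolated :: "'a set \<Rightarrow> ('a \<Rightarrow> 'a \<Rightarrow> bool) \<Rightarrow> bool" where
  "no_isolated V E \<longleftrightarrow> (\<forall>v\<in>V. \<exists>u. E v u)"

definition nbhd :: "'a set \<Rightarrow> ('a \<Rightarrow> 'a \<Rightarrow> bool) \<Rightarrow> 'a \<Rightarrow> 'a set" where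
  "nbhd V E v = {u \<in> V. E v u}"

definition nbhdA :: "'a set \<Rightarrow> ('a \<Rightarrow> 'a \<Rightarrow> bool) \<Rightarrow> 'a set \<Rightarrow> 'a \<Rightarrow> 'a set" where
  "nbhdA V E A v = nbhd V E v \<inter> A"

definition WA :: "'a set \<Rightarrow> ('a \<Rightarrow> 'a \<Rightarrow> bool) \<Rightarrow> ('a \<Rightarrow> 'a \<Rightarrow> rat) \<Rightarrow> 'a set \<Rightarrow> 'a \<Rightarrow> rat" where
  "WA V E w A v = (\<Sum>u\<in>nbhdA V E A v. w v u)"

definition Wv :: "'a set \<Rightarrow> ('a \<Rightarrow> 'a \<Rightarrow> bool) \<Rightarrow> ('a \<Rightarrow> 'a \<Rightarrow> rat) \<Rightarrow> 'a \<Rightarrow> rat" where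
  "Wv V E w v = WA V E w V v"

definition Wmax :: "'a set \<Rightarrow> ('a \<Rightarrow> 'a \<Rightarrow> bool) \<Rightarrow> ('a \<Rightarrow> 'a \<Rightarrow> rat) \<Rightarrow> rat" where
  "Wmax V E w = Max (Wv V E w ` V)"

definition maxdeg :: "'a set \<Rightarrow> ('a \<Rightarrow> 'a \<Rightarrow> bool) \<Rightarrow> nat" where
  "maxdeg V E = Max ((\<lambda>v. card (nbhd V E v)) ` V)"

definition denom :: "rat \<Rightarrow> int" where
  "denom q = snd (quotient_of q)"

definition lv :: "'a set \<Rightarrow> ('a \<Rightarrow> 'a \<Rightarrow> bool) \<Rightarrow> ('a \<Rightarrow> 'a \<Rightarrow> rat) \<Rightarrow> 'a \<Rightarrow> int" where
  "lv V E w v = Lcm (denom ` ({Wv V E w v / 2} \<union> (\<lambda>u. w v u) ` nbhd V E v))"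

definition Lmax :: "'a set \<Rightarrow> ('a \<Rightarrow> 'a \<Rightarrow> bool) \<Rightarrow> ('a \<Rightarrow> 'a \<Rightarrow> rat) \<Rightarrow> int" where
  "Lmax V E w = Max (lv V E w ` V)"

definition hA :: "'a set \<Rightarrow> ('a \<Rightarrow> 'a \<Rightarrow> bool) \<Rightarrow> ('a \<Rightarrow> 'a \<Rightarrow> rat) \<Rightarrow> 'a set \<Rightarrow> 'a \<Rightarrow> rat" where
  "hA V E w A v = (if v \<in> A \<or> WA V E w A v \<ge> Wv V E w v / 2 then Wv V E w v / 2 else WA V E w A v)"

definition hfun :: "'a set \<Rightarrow> ('a \<Rightarrow> 'a \<Rightarrow> bool) \<Rightarrow> ('a \<Rightarrow> 'a \<Rightarrow> rat) \<Rightarrow> 'a set \<Rightarrow> rat" where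
  "hfun V E w A = (\<Sum>v\<in>V. hA V E w A v)"

definition deltaA :: "'a set \<Rightarrow> ('a \<Rightarrow> 'a \<Rightarrow> bool) \<Rightarrow> 'a set \<Rightarrow> 'a \<Rightarrow> nat" where
  "deltaA V E A v = (if card (nbhdA V E A v) > 0 then 1 else 0)"

definition ffun :: "'a set \<Rightarrow> ('a \<Rightarrow> 'a \<Rightarrow> bool) \<Rightarrow> 'a set \<Rightarrow> nat" where
  "ffun V E A = (\<Sum>v\<in>V. deltaA V E A v)"

definition gfun :: "'a set \<Rightarrow> ('a \<Rightarrow> 'a \<Rightarrow> bool) \<Rightarrow> ('a \<Rightarrow> 'a \<Rightarrow> rat) \<Rightarrow> 'a set \<Rightarrow> rat" where
  "gfun V E w A = hfun V E w A + of_nat (ffun V E A) / of_int (Lmax V E w)"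

definition greedy_step :: "('a set \<Rightarrow> rat) \<Rightarrow> 'a set \<Rightarrow> 'a set \<Rightarrow> 'a set \<Rightarrow> bool" where
  "greedy_step g U S S' \<longleftrightarrow> (\<exists>u\<in>U - S. g (S \<union> {u}) - g S > 0
      \<and> (\<forall>u'\<in>U - S. g (S \<union> {u'}) - g S \<le> g (S \<union> {u}) - g S)
      \<and> S' = S \<union> {u})"

text \<open>S is a possible output of the greedy algorithm (for some tie-breaking).\<close>
definition greedy_output :: "('a set \<Rightarrow> rat) \<Rightarrow> 'a set \<Rightarrow> 'a set \<Rightarrow> bool" where
  "greedy_output g U S \<longleftrightarrow> (greedy_step g U)\<^sup>*\<^sup>* {} S
      \<and> \<not> (\<exists>u\<in>U - S. g (S \<union> {u}) - g S > 0)"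

definition WPPITDS :: "'a set \<Rightarrow> ('a \<Rightarrow> 'a \<Rightarrow> bool) \<Rightarrow> ('a \<Rightarrow> 'a \<Rightarrow> rat) \<Rightarrow> 'a set \<Rightarrow> bool" where
  "WPPITDS V E w S \<longleftrightarrow> S \<subseteq> V
     \<and> (\<forall>v\<in>V - S. WA V E w S v \<ge> Wv V E w v / 2)
     \<and> (\<forall>v\<in>S. card (nbhdA V E S v) > 0)"

end

theory Submission
  imports Defs
begin

text \<open>The function \<open>g = h + f/L\<close> is monotone and submodular: \<open>h\<^sub>A(v)\<close> is a modular
  function of \<open>A\<close> truncated at \<open>W(v)/2\<close>, and \<open>\<delta>\<^sub>A(v)\<close> is a coverage indicator. For
  \<open>A \<subseteq> V\<close> we have \<open>g(A) = g(V)\<close> exactly when \<open>A\<close> is a WPPITDS, and since \<open>l(v) h\<^sub>A(v)\<close> is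
  an integer, every positive marginal gain of \<open>g\<close> is at least \<open>1/L\<close>. Wolsey's analysis of
  greedy submodular cover then applies: with \<open>k = |S*|\<close>, each greedy step shrinks the residual
  \<open>g(V) - g(S)\<close> by at least \<open>1/L\<close> and by at least a \<open>k\<close>-th of it, so it lowers a concave
  potential of the residual by at least one; initially that potential is at most
  \<open>k (1 + ln (L D))\<close>, where \<open>D = 3/2 W + \<Delta>/L\<close> bounds the gain of a single vertex.\<close>

text \<open>Concave in \<open>r\<close> with slope \<open>min L (k/r)\<close>, so a greedy step, which lowers the residual
  \<open>r\<close> by at least \<open>1/L\<close> and at least \<open>r/k\<close>, lowers the potential by at least one.\<close>

definition greedy_potential :: "real \<Rightarrow> real \<Rightarrow> real \<Rightarrow> real" where
  "greedy_potential k L r = (if r \<le> k / L then L * r else k + k * ln (r * L / k))"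

lemma greedy_potential_nonneg:
  assumes k: "0 < k" and L: "0 < L" and r: "0 \<le> r"
  shows "0 \<le> greedy_potential k L r"
proof (cases "r \<le> k / L")
  case False
  then have "1 < r * L / k" using k L by (simp add: field_simps)
  then show ?thesis using False k by (simp add: greedy_potential_def)
qed (use L r in \<open>simp add: greedy_potential_def\<close>)

lemma greedy_potential_concave:
  assumes k: "0 < k" and L: "0 < L" and b: "0 \<le> b" "b \<le> a"
  shows "greedy_potential k L b + min L (k / a) * (a - b) \<le> greedy_potential k L a"
proof (cases "a \<le> k / L")
  case True
  have "min L (k / a) * (a - b) = L * (a - b)"
  proof (cases "a = 0")
    case False
    then have "L \<le> k / a" using True b L by (simp add: field_simps)
    then show ?thesis by simp
  qed (use b in simp)
  then show ?thesis using True b by (simp add: greedy_potential_def algebra_simps)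
next
  case a_large: False
  have kL: "0 < k / L" using k L by simp
  have a_pos: "0 < a" using a_large kL by linarith
  then have a: "0 < a" "k / a < L" "1 < a * L / k"
    using a_large k L by (auto simp: field_simps)
  then have slope: "min L (k / a) = k / a" by simp
  show ?thesis
  proof (cases "b \<le> k / L")
    case True
    have "1 - k / (a * L) \<le> ln (a * L / k)"
      using ln_le_minus_one[of "k / (a * L)"] k L a by (simp add: ln_div)
    then have "k * (1 - k / (a * L)) \<le> k * ln (a * L / k)"
      using k by (intro mult_left_mono) auto
    moreover have "(k / L) * (L - k / a) = k * (1 - k / (a * L))"
      using L a by (simp add: field_simps)
    moreover have "b * (L - k / a) \<le> (k / L) * (L - k / a)"
      using True a by (intro mult_right_mono) auto
    moreover have "L * b + k / a * (a - b) = k + b * (L - k / a)"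
      using a by (simp add: field_simps)
    ultimately show ?thesis using True a_large slope by (simp add: greedy_potential_def)
  next
    case False
    have b_pos: "0 < b" using False kL by linarith
    have "ln (b * L / k) = ln (a * L / k) + ln (b / a)"
      using ln_mult_pos[of "a * L / k" "b / a"] a b_pos k L by (simp add: field_simps)
    moreover have "k * ln (b / a) \<le> k * (b / a - 1)"
      using ln_le_minus_one[of "b / a"] a b_pos k by (intro mult_left_mono) auto
    moreover have "k / a * (a - b) = k - k * (b / a)"
      using a by (simp add: field_simps)
    ultimately show ?thesis
      using False a_large slope by (simp add: greedy_potential_def algebra_simps)
  qed
qed

lemma greedy_potential_step:
  assumes k: "0 < k" and L: "0 < L" and t: "1 / L \<le> t" "a \<le> k * t" "t \<le> a"
  shows "greedy_potential k L (a - t) + 1 \<le> greedy_potential k L a"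
proof -
  have "0 < 1 / L" using L by simp
  then have t_pos: "0 < t" and a_pos: "0 < a" using t by linarith+
  have "1 \<le> min L (k / a) * t"
    using t t_pos a_pos L by (auto simp: min_def field_simps)
  moreover have "greedy_potential k L (a - t) + min L (k / a) * t \<le> greedy_potential k L a"
    using greedy_potential_concave[OF k L, of "a - t" a] t t_pos by simp
  ultimately show ?thesis by simp
qed

lemma greedy_potential_le:
  assumes k: "0 < k" and L: "0 < L" and r: "r \<le> k * D" and LD: "1 \<le> L * D"
  shows "greedy_potential k L r \<le> k * (1 + ln (L * D))"
proof (cases "r \<le> k / L")
  case True
  then have "L * r \<le> k" using L by (simp add: field_simps)
  moreover have "0 \<le> k * ln (L * D)" using LD k by simp
  ultimately show ?thesis using True by (simp add: greedy_potential_def algebra_simps)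
next
  case False
  moreover have "0 < k / L" using k L by simp
  ultimately have "0 < r * L / k" "r * L / k \<le> L * D"
    using r k L by (auto simp: field_simps)
  then have "ln (r * L / k) \<le> ln (L * D)" by simp
  then show ?thesis using False k by (simp add: greedy_potential_def algebra_simps)
qed

lemma greedy_reachable_subset: "(greedy_step g U)\<^sup>*\<^sup>* {} S \<Longrightarrow> S \<subseteq> U"
  by (induction rule: rtranclp_induct) (auto simp: greedy_step_def)

lemma greedy_output_subset: "greedy_output g U S \<Longrightarrow> S \<subseteq> U"
  unfolding greedy_output_def using greedy_reachable_subset by blast

locale submodular_cover =
  fixes U :: "'a set" and g :: "'a set \<Rightarrow> rat"
  assumes finite_U: "finite U"
    and mono: "Y \<subseteq> X \<Longrightarrow> X \<subseteq> U \<Longrightarrow> g Y \<le> g X"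
    and submodular: "Y \<subseteq> X \<Longrightarrow> X \<subseteq> U \<Longrightarrow> u \<in> U \<Longrightarrow>
      g (insert u X) - g X \<le> g (insert u Y) - g Y"
begin

lemma gain_union_le_sum_gains:
  assumes "A \<subseteq> U" "B \<subseteq> U"
  shows "g (A \<union> B) - g A \<le> (\<Sum>x\<in>B. g (insert x A) - g A)"
  using finite_subset[OF \<open>B \<subseteq> U\<close> finite_U] \<open>B \<subseteq> U\<close>
proof (induction B rule: finite_induct)
  case (insert x B)
  have "g (insert x (A \<union> B)) - g (A \<union> B) \<le> g (insert x A) - g A"
    using submodular[of A "A \<union> B" x] insert.prems assms(1) by auto
  then show ?case using insert by simp
qed simp

lemma greedy_output_eq_top:
  assumes "greedy_output g U S"
  shows "g S = g U"
proof -
  have S: "S \<subseteq> U" using greedy_output_subset[OF assms] .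
  have "g (S \<union> U) - g S \<le> (\<Sum>x\<in>U. g (insert x S) - g S)"
    using S by (intro gain_union_le_sum_gains) auto
  also have "\<dots> \<le> 0"
  proof (rule sum_nonpos)
    fix x assume "x \<in> U"
    then show "g (insert x S) - g S \<le> 0"
      using assms by (cases "x \<in> S") (auto simp: greedy_output_def insert_absorb not_less)
  qed
  finally show ?thesis using S mono[OF S] by (simp add: Un_absorb1)
qed

lemma greedy_gain_ge_residual:
  assumes S: "S \<subseteq> U" and Sopt: "Sopt \<subseteq> U" "g Sopt = g U" and u: "u \<in> U"
    and greedy: "\<forall>x\<in>U - S. g (insert x S) - g S \<le> g (insert u S) - g S"
  shows "g U - g S \<le> of_nat (card Sopt) * (g (insert u S) - g S)"
proof -
  have "g U = g (S \<union> Sopt)"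
    using mono[of Sopt "S \<union> Sopt"] mono[of "S \<union> Sopt" U] S Sopt by auto
  then have "g U - g S \<le> (\<Sum>x\<in>Sopt. g (insert x S) - g S)"
    using gain_union_le_sum_gains[OF S Sopt(1)] by simp
  also have "\<dots> \<le> of_nat (card Sopt) * (g (insert u S) - g S)"
  proof (rule sum_bounded_above)
    fix x assume "x \<in> Sopt"
    then show "g (insert x S) - g S \<le> g (insert u S) - g S"
      using greedy Sopt(1) mono[of S "insert u S"] S u by (cases "x \<in> S") (auto simp: insert_absorb)
  qed
  finally show ?thesis .
qed

lemma greedy_card_plus_potential_le:
  fixes L :: rat
  assumes Sopt: "Sopt \<subseteq> U" "Sopt \<noteq> {}" "g Sopt = g U" and L: "0 < L"
    and gain: "\<And>X u. X \<subseteq> U \<Longrightarrow> u \<in> U \<Longrightarrow> 0 < g (insert u X) - g X \<Longrightarrow> 1 / L \<le> g (insert u X) - g X"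
    and reach: "(greedy_step g U)\<^sup>*\<^sup>* {} S"
  shows "real (card S) + greedy_potential (card Sopt) (of_rat L) (of_rat (g U - g S))
    \<le> greedy_potential (card Sopt) (of_rat L) (of_rat (g U - g {}))"
  using reach
proof (induction rule: rtranclp_induct)
  case (step S S')
  let ?\<Phi> = "greedy_potential (card Sopt) (of_rat L)"
  from step.hyps(2) obtain u where u: "u \<in> U - S" "0 < g (insert u S) - g S"
    and greedy: "\<forall>x\<in>U - S. g (insert x S) - g S \<le> g (insert u S) - g S" and S': "S' = insert u S"
    unfolding greedy_step_def by auto
  have S: "S \<subseteq> U" using greedy_reachable_subset[OF step.hyps(1)] .
  define t where "t = g (insert u S) - g S"
  have k: "0 < real (card Sopt)"
    using Sopt finite_subset[OF _ finite_U] by (simp add: card_gt_0_iff)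
  have "1 / L \<le> t" using gain[OF S _ u(2)] u(1) by (simp add: t_def)
  then have t_min: "1 / of_rat L \<le> real_of_rat t"
    by (metis of_rat_divide of_rat_less_eq of_rat_1)
  have "g U - g S \<le> of_nat (card Sopt) * t"
    using greedy_gain_ge_residual[OF S Sopt(1,3)] u greedy by (simp add: t_def)
  then have t_large: "real_of_rat (g U - g S) \<le> real (card Sopt) * of_rat t"
    by (metis of_rat_less_eq of_rat_mult of_rat_of_nat_eq)
  have "g (insert u S) \<le> g U" using mono u S by auto
  then have t_le: "real_of_rat t \<le> of_rat (g U - g S)"
    by (simp add: t_def of_rat_less_eq)
  have "?\<Phi> (of_rat (g U - g S')) + 1 \<le> ?\<Phi> (of_rat (g U - g S))"
    using greedy_potential_step[OF k _ t_min t_large t_le] L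
    by (simp add: S' t_def of_rat_diff)
  moreover have "card S' = card S + 1"
    using S' u finite_subset[OF S finite_U] by auto
  ultimately show ?case using step.IH by simp
qed simp

theorem greedy_output_card_le:
  fixes L D :: rat
  assumes out: "greedy_output g U S"
    and Sopt: "Sopt \<subseteq> U" "Sopt \<noteq> {}" "g Sopt = g U" and L: "0 < L"
    and gain: "\<And>X u. X \<subseteq> U \<Longrightarrow> u \<in> U \<Longrightarrow> 0 < g (insert u X) - g X \<Longrightarrow> 1 / L \<le> g (insert u X) - g X"
    and D: "\<And>u. u \<in> U \<Longrightarrow> g {u} - g {} \<le> D" and LD: "1 \<le> L * D"
  shows "real (card S) \<le> (1 + ln (of_rat (L * D))) * real (card Sopt)"
proof -
  let ?\<Phi> = "greedy_potential (card Sopt) (of_rat L)"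
  have k: "0 < real (card Sopt)"
    using Sopt finite_subset[OF _ finite_U] by (simp add: card_gt_0_iff)
  have "g U - g {} \<le> (\<Sum>x\<in>Sopt. g (insert x {}) - g {})"
    using gain_union_le_sum_gains[of "{}" Sopt] Sopt by simp
  also have "\<dots> \<le> of_nat (card Sopt) * D"
    using D Sopt(1) by (intro sum_bounded_above) auto
  finally have "real_of_rat (g U - g {}) \<le> real (card Sopt) * of_rat D"
    by (metis of_rat_less_eq of_rat_mult of_rat_of_nat_eq)
  then have "?\<Phi> (of_rat (g U - g {})) \<le> real (card Sopt) * (1 + ln (of_rat L * of_rat D))"
    using LD L by (intro greedy_potential_le[OF k]) (auto simp flip: of_rat_mult simp: of_rat_less_eq)
  moreover have "real (card S) + ?\<Phi> (of_rat (g U - g S)) \<le> ?\<Phi> (of_rat (g U - g {}))"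
    using out Sopt L gain by (intro greedy_card_plus_potential_le) (auto simp: greedy_output_def)
  moreover have "0 \<le> ?\<Phi> (of_rat (g U - g S))"
    using greedy_output_eq_top[OF out] k L by (intro greedy_potential_nonneg) auto
  ultimately show ?thesis by (simp add: of_rat_mult algebra_simps)
qed

end

lemma min_add_diff_antimono:
  fixes x y a c :: "'b :: linordered_idom"
  assumes "x \<le> y" "0 \<le> a"
  shows "min c (y + a) - min c y \<le> min c (x + a) - min c x"
  using assms by (auto simp: min_def)

lemma denom_dvd_imp_mult_Ints:
  assumes "denom q dvd l"
  shows "rat_of_int l * q \<in> \<int>"
proof -
  obtain a b where q: "quotient_of q = (a, b)" by (cases "quotient_of q")
  obtain m where "l = b * m" using assms q by (auto simp: denom_def elim: dvdE)
  then have "rat_of_int l * q = of_int (m * a)"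
    using quotient_of_div[OF q] quotient_of_denom_pos[OF q] by simp
  then show ?thesis by simp
qed

lemma sum_pos_imp_ge:
  fixes f :: "'b \<Rightarrow> 'c :: linordered_idom"
  assumes "finite A" "\<And>x. x \<in> A \<Longrightarrow> 0 \<le> f x" "\<And>x. x \<in> A \<Longrightarrow> 0 < f x \<Longrightarrow> c \<le> f x"
    and "0 < sum f A"
  shows "c \<le> sum f A"
proof -
  obtain x where x: "x \<in> A" "0 < f x"
    using assms(4) sum_nonpos[of A f] by (meson not_le)
  have "f x \<le> sum f A"
    using x assms(1,2) by (intro member_le_sum) auto
  with assms(3)[OF x] show ?thesis by (rule order.trans)
qed

lemma Ints_pos_imp_ge_1: "(x :: 'a :: linordered_idom) \<in> \<int> \<Longrightarrow> 0 < x \<Longrightarrow> 1 \<le> x"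
  by (elim Ints_cases) simp

locale weighted_graph =
  fixes V :: "'a set" and E :: "'a \<Rightarrow> 'a \<Rightarrow> bool" and w :: "'a \<Rightarrow> 'a \<Rightarrow> rat"
  assumes wgraph: "wgraph V E w"
begin

lemma finite_V: "finite V"
  using wgraph by (simp add: wgraph_def)

lemma finite_nbhd: "finite (nbhd V E v)"
  using finite_V by (simp add: nbhd_def)

lemma E_sym: "E u v \<Longrightarrow> E v u"
  using wgraph by (simp add: wgraph_def)

lemma E_irrefl: "\<not> E v v"
  using wgraph by (simp add: wgraph_def)

lemma E_in_V: "E u v \<Longrightarrow> u \<in> V \<and> v \<in> V"
  using wgraph by (simp add: wgraph_def)

lemma w_sym: "E u v \<Longrightarrow> w u v = w v u"
  using wgraph by (simp add: wgraph_def)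

lemma w_pos: "u \<in> nbhd V E v \<Longrightarrow> 0 < w v u"
  using wgraph by (simp add: wgraph_def nbhd_def)

lemma nbhd_subset: "nbhd V E v \<subseteq> V"
  by (auto simp: nbhd_def)

lemma nbhd_sym: "{v \<in> V. E v u} = nbhd V E u"
  by (auto simp: nbhd_def intro: E_sym)

lemma WA_nonneg: "0 \<le> WA V E w X v"
  unfolding WA_def nbhdA_def by (rule sum_nonneg) (auto intro: less_imp_le w_pos)

lemma Wv_nonneg: "0 \<le> Wv V E w v"
  unfolding Wv_def by (rule WA_nonneg)

lemma WA_insert:
  "WA V E w (insert u X) v = WA V E w X v + (if u \<in> nbhd V E v \<and> u \<notin> X then w v u else 0)"
proof (cases "u \<in> nbhd V E v \<and> u \<notin> X")
  case True
  then have "nbhd V E v \<inter> insert u X = insert u (nbhd V E v \<inter> X)" by auto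
  then show ?thesis using True finite_nbhd by (simp add: WA_def nbhdA_def)
next
  case False
  then have "nbhd V E v \<inter> insert u X = nbhd V E v \<inter> X" by auto
  then show ?thesis using False by (auto simp: WA_def nbhdA_def)
qed

lemma Wv_eq_sum: "Wv V E w v = (\<Sum>u\<in>nbhd V E v. w v u)"
  by (simp add: Wv_def WA_def nbhdA_def nbhd_def Int_absorb2)

definition cover_weight :: "'a set \<Rightarrow> 'a \<Rightarrow> rat" where
  "cover_weight X v = WA V E w X v + (if v \<in> X then Wv V E w v / 2 else 0)"

lemma hA_eq_min: "hA V E w X v = min (Wv V E w v / 2) (cover_weight X v)"
  using WA_nonneg[of X v] by (auto simp: hA_def cover_weight_def min_def)

lemma cover_weight_mono: "Y \<subseteq> X \<Longrightarrow> cover_weight Y v \<le> cover_weight X v"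
  unfolding cover_weight_def WA_def nbhdA_def using Wv_nonneg[of v] finite_nbhd
  by (intro add_mono sum_mono2) (auto intro: less_imp_le w_pos)

lemma cover_weight_insert:
  "u \<notin> X \<Longrightarrow> cover_weight (insert u X) v = cover_weight X v
     + ((if u \<in> nbhd V E v then w v u else 0) + (if u = v then Wv V E w v / 2 else 0))"
  by (auto simp: cover_weight_def WA_insert)

lemma hA_mono: "Y \<subseteq> X \<Longrightarrow> hA V E w Y v \<le> hA V E w X v"
  unfolding hA_eq_min by (intro min.mono order.refl cover_weight_mono)

lemma hA_submodular:
  assumes "Y \<subseteq> X"
  shows "hA V E w (insert u X) v - hA V E w X v \<le> hA V E w (insert u Y) v - hA V E w Y v"
proof (cases "u \<in> X")
  case True
  then show ?thesis using hA_mono[of Y "insert u Y" v] by (auto simp: insert_absorb)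
next
  case False
  define a where "a = (if u \<in> nbhd V E v then w v u else 0) + (if u = v then Wv V E w v / 2 else 0)"
  have "0 \<le> a" using w_pos[of u v] Wv_nonneg[of v] by (auto simp: a_def)
  moreover have "u \<notin> Y" using False assms by auto
  ultimately show ?thesis
    using min_add_diff_antimono[OF cover_weight_mono[OF assms]] False
    by (simp add: hA_eq_min cover_weight_insert a_def[symmetric])
qed

lemma deltaA_eq: "deltaA V E X v = (if nbhd V E v \<inter> X = {} then 0 else 1)"
  using finite_nbhd[of v] by (auto simp: deltaA_def nbhdA_def card_gt_0_iff)

lemma deltaA_le_1: "deltaA V E X v \<le> 1"
  by (simp add: deltaA_eq)

lemma deltaA_mono: "Y \<subseteq> X \<Longrightarrow> deltaA V E Y v \<le> deltaA V E X v"
  by (auto simp: deltaA_eq)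

lemma deltaA_submodular:
  "Y \<subseteq> X \<Longrightarrow> rat_of_nat (deltaA V E (insert u X) v) - of_nat (deltaA V E X v)
     \<le> of_nat (deltaA V E (insert u Y) v) - of_nat (deltaA V E Y v)"
  by (auto simp: deltaA_eq)

lemma lv_pos: "0 < lv V E w v"
proof -
  have "0 < denom q" for q
    by (simp add: denom_def quotient_of_denom_pos')
  then have "0 \<notin> denom ` ({Wv V E w v / 2} \<union> (\<lambda>u. w v u) ` nbhd V E v)"
    by (metis imageE less_irrefl)
  then show ?thesis
    using Lcm_0_iff[of "denom ` ({Wv V E w v / 2} \<union> (\<lambda>u. w v u) ` nbhd V E v)"] finite_nbhd
    by (simp add: lv_def order_less_le)
qed

lemma lv_mult_hA_Ints: "rat_of_int (lv V E w v) * hA V E w X v \<in> \<int>"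
proof -
  have "rat_of_int (lv V E w v) * w v u \<in> \<int>" if "u \<in> nbhd V E v" for u
    using that by (intro denom_dvd_imp_mult_Ints) (simp add: lv_def dvd_Lcm)
  then have "rat_of_int (lv V E w v) * WA V E w X v \<in> \<int>"
    unfolding WA_def nbhdA_def sum_distrib_left by (intro Ints_sum) auto
  moreover have "rat_of_int (lv V E w v) * (Wv V E w v / 2) \<in> \<int>"
    by (intro denom_dvd_imp_mult_Ints) (simp add: lv_def dvd_Lcm)
  ultimately show ?thesis by (simp add: hA_def)
qed

lemma hA_gain_ge:
  assumes "0 < hA V E w (insert u X) v - hA V E w X v"
  shows "1 / rat_of_int (lv V E w v) \<le> hA V E w (insert u X) v - hA V E w X v"
proof -
  let ?l = "rat_of_int (lv V E w v)"
  have "?l * (hA V E w (insert u X) v - hA V E w X v) \<in> \<int>"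
    using lv_mult_hA_Ints[of v "insert u X"] lv_mult_hA_Ints[of v X]
    by (simp add: right_diff_distrib Ints_diff)
  then have "1 \<le> ?l * (hA V E w (insert u X) v - hA V E w X v)"
    using assms lv_pos[of v] by (intro Ints_pos_imp_ge_1) auto
  then show ?thesis using lv_pos[of v] by (simp add: field_simps)
qed

lemma lv_le_Lmax: "v \<in> V \<Longrightarrow> lv V E w v \<le> Lmax V E w"
  unfolding Lmax_def using finite_V by (intro Max_ge) auto

lemma Wv_le_Wmax: "v \<in> V \<Longrightarrow> Wv V E w v \<le> Wmax V E w"
  unfolding Wmax_def using finite_V by (intro Max_ge) auto

lemma card_nbhd_le_maxdeg: "v \<in> V \<Longrightarrow> card (nbhd V E v) \<le> maxdeg V E"
  unfolding maxdeg_def using finite_V by (intro Max_ge) auto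

end

locale graph_without_isolated = weighted_graph +
  assumes V_nonempty: "V \<noteq> {}" and no_isolated: "no_isolated V E"
begin

lemma Lmax_pos: "0 < Lmax V E w"
  using V_nonempty lv_pos lv_le_Lmax by (meson ex_in_conv less_le_trans)

definition g_contrib :: "'a set \<Rightarrow> 'a \<Rightarrow> rat" where
  "g_contrib X v = hA V E w X v + of_nat (deltaA V E X v) / of_int (Lmax V E w)"

lemma gfun_eq_sum: "gfun V E w X = (\<Sum>v\<in>V. g_contrib X v)"
  by (simp add: gfun_def g_contrib_def hfun_def ffun_def sum.distrib sum_divide_distrib)

lemma g_contrib_mono: "Y \<subseteq> X \<Longrightarrow> g_contrib Y v \<le> g_contrib X v"
  unfolding g_contrib_def using hA_mono deltaA_mono Lmax_pos
  by (intro add_mono divide_right_mono) auto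

lemma g_contrib_submodular:
  assumes "Y \<subseteq> X"
  shows "g_contrib (insert u X) v - g_contrib X v \<le> g_contrib (insert u Y) v - g_contrib Y v"
proof -
  have "(rat_of_nat (deltaA V E (insert u X) v) - of_nat (deltaA V E X v)) / of_int (Lmax V E w)
     \<le> (rat_of_nat (deltaA V E (insert u Y) v) - of_nat (deltaA V E Y v)) / of_int (Lmax V E w)"
    using deltaA_submodular[OF assms] Lmax_pos by (intro divide_right_mono) auto
  then show ?thesis
    using hA_submodular[OF assms, of u v] unfolding g_contrib_def diff_divide_distrib by linarith
qed

lemma g_contrib_gain_ge:
  assumes v: "v \<in> V" and gain: "0 < g_contrib (insert u X) v - g_contrib X v"
  shows "1 / of_int (Lmax V E w) \<le> g_contrib (insert u X) v - g_contrib X v"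
proof (cases "deltaA V E X v = deltaA V E (insert u X) v")
  case True
  then have "0 < hA V E w (insert u X) v - hA V E w X v"
    using gain by (simp add: g_contrib_def)
  then have "1 / of_int (lv V E w v) \<le> hA V E w (insert u X) v - hA V E w X v"
    by (rule hA_gain_ge)
  moreover have "1 / rat_of_int (Lmax V E w) \<le> 1 / of_int (lv V E w v)"
    using lv_le_Lmax[OF v] lv_pos[of v] by (intro divide_left_mono) auto
  ultimately show ?thesis using True by (simp add: g_contrib_def)
next
  case False
  then have "deltaA V E X v = 0" "deltaA V E (insert u X) v = 1"
    by (auto simp: deltaA_eq split: if_splits)
  then show ?thesis
    using hA_mono[OF subset_insertI[of X u], of v] by (simp add: g_contrib_def)
qed

sublocale submodular_cover V "gfun V E w"
proof
  show "finite V" by (rule finite_V)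
next
  fix X Y :: "'a set" and u
  assume "Y \<subseteq> X"
  then show "gfun V E w Y \<le> gfun V E w X"
    unfolding gfun_eq_sum by (intro sum_mono g_contrib_mono)
  show "gfun V E w (insert u X) - gfun V E w X \<le> gfun V E w (insert u Y) - gfun V E w Y"
    unfolding gfun_eq_sum sum_subtractf[symmetric] using \<open>Y \<subseteq> X\<close>
    by (intro sum_mono g_contrib_submodular)
qed

lemma gfun_gain_ge:
  assumes "0 < gfun V E w (insert u X) - gfun V E w X"
  shows "1 / of_int (Lmax V E w) \<le> gfun V E w (insert u X) - gfun V E w X"
  using assms unfolding gfun_eq_sum sum_subtractf[symmetric]
  by (intro sum_pos_imp_ge finite_V g_contrib_gain_ge) (auto intro: g_contrib_mono)

lemma nbhd_nonempty: "v \<in> V \<Longrightarrow> nbhd V E v \<noteq> {}"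
  using no_isolated E_in_V unfolding no_isolated_def nbhd_def by blast

lemma Wv_pos: "v \<in> V \<Longrightarrow> 0 < Wv V E w v"
  unfolding Wv_eq_sum using nbhd_nonempty finite_nbhd w_pos by (intro sum_pos) auto

lemma g_contrib_eq_top_iff:
  assumes v: "v \<in> V"
  shows "g_contrib X v = g_contrib V v
    \<longleftrightarrow> (v \<in> X \<or> Wv V E w v / 2 \<le> WA V E w X v) \<and> nbhd V E v \<inter> X \<noteq> {}"
proof -
  have top: "g_contrib V v = Wv V E w v / 2 + 1 / of_int (Lmax V E w)"
    using v nbhd_nonempty[OF v] by (simp add: g_contrib_def hA_def deltaA_eq nbhd_subset Int_absorb2)
  have "hA V E w X v \<le> Wv V E w v / 2"
    by (simp add: hA_def)
  moreover have "of_nat (deltaA V E X v) / rat_of_int (Lmax V E w) \<le> 1 / of_int (Lmax V E w)"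
    using Lmax_pos deltaA_le_1[of X v] by (intro divide_right_mono) auto
  ultimately have "g_contrib X v = g_contrib V v \<longleftrightarrow> hA V E w X v = Wv V E w v / 2
      \<and> of_nat (deltaA V E X v) / rat_of_int (Lmax V E w) = 1 / of_int (Lmax V E w)"
    using top unfolding g_contrib_def by linarith
  also have "\<dots> \<longleftrightarrow> (v \<in> X \<or> Wv V E w v / 2 \<le> WA V E w X v) \<and> nbhd V E v \<inter> X \<noteq> {}"
    using Lmax_pos by (auto simp: hA_def deltaA_eq)
  finally show ?thesis .
qed

lemma gfun_eq_top_iff_WPPITDS:
  assumes X: "X \<subseteq> V"
  shows "gfun V E w X = gfun V E w V \<longleftrightarrow> WPPITDS V E w X"
proof -
  have "gfun V E w X = gfun V E w V \<longleftrightarrow> (\<Sum>v\<in>V. g_contrib V v - g_contrib X v) = 0"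
    unfolding gfun_eq_sum sum_subtractf by auto
  also have "\<dots> \<longleftrightarrow> (\<forall>v\<in>V. g_contrib X v = g_contrib V v)"
    using finite_V g_contrib_mono[OF X] by (auto simp: sum_nonneg_eq_0_iff)
  also have "\<dots> \<longleftrightarrow> (\<forall>v\<in>V. (v \<in> X \<or> Wv V E w v / 2 \<le> WA V E w X v) \<and> nbhd V E v \<inter> X \<noteq> {})"
    using g_contrib_eq_top_iff[of _ X] by simp
  also have "\<dots> \<longleftrightarrow> WPPITDS V E w X"
  proof -
    have "nbhd V E v \<inter> X \<noteq> {}" if "v \<in> V" "Wv V E w v / 2 \<le> WA V E w X v" for v
      using that Wv_pos[of v] by (auto simp: WA_def nbhdA_def)
    then show ?thesis
      using X finite_nbhd by (auto simp: WPPITDS_def nbhdA_def card_gt_0_iff)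
  qed
  finally show ?thesis .
qed

lemma WPPITDS_nonempty:
  assumes "WPPITDS V E w X"
  shows "X \<noteq> {}"
proof
  assume "X = {}"
  obtain v where v: "v \<in> V" using V_nonempty by blast
  then have "Wv V E w v / 2 \<le> WA V E w {} v" using assms \<open>X = {}\<close> by (simp add: WPPITDS_def)
  then show False using Wv_pos[OF v] by (simp add: WA_def nbhdA_def)
qed

lemma gfun_empty: "gfun V E w {} = 0"
proof -
  have "hA V E w {} v = 0" for v
    using Wv_nonneg[of v] by (simp add: hA_def WA_def nbhdA_def)
  then show ?thesis by (simp add: gfun_def hfun_def ffun_def deltaA_def nbhdA_def)
qed

lemma hfun_singleton_le:
  assumes u: "u \<in> V"
  shows "hfun V E w {u} \<le> 3 / 2 * Wv V E w u"
proof -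
  have "hA V E w {u} v \<le> (if v = u then Wv V E w u / 2 else 0) + (if E v u then w u v else 0)" for v
  proof (cases "v = u")
    case False
    then have "hA V E w {u} v \<le> WA V E w {u} v" by (simp add: hA_eq_min cover_weight_def)
    also have "\<dots> = (if E v u then w u v else 0)"
      using WA_insert[of u "{}" v] E_in_V[of v u] w_sym[of u v] E_sym
      by (auto simp: WA_def nbhdA_def nbhd_def)
    finally show ?thesis using False by simp
  qed (simp add: hA_def E_irrefl)
  then have "hfun V E w {u} \<le> (\<Sum>v\<in>V. (if v = u then Wv V E w u / 2 else 0) + (if E v u then w u v else 0))"
    unfolding hfun_def by (intro sum_mono)
  also have "\<dots> = Wv V E w u / 2 + (\<Sum>v\<in>{v \<in> V. E v u}. w u v)"
    using u finite_V by (simp add: sum.distrib sum.inter_filter)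
  also have "\<dots> = 3 / 2 * Wv V E w u"
    by (simp add: nbhd_sym Wv_eq_sum)
  finally show ?thesis .
qed

lemma ffun_singleton: "u \<in> V \<Longrightarrow> ffun V E {u} = card (nbhd V E u)"
proof -
  assume u: "u \<in> V"
  have "ffun V E {u} = (\<Sum>v\<in>V. if E v u then 1 else 0)"
    unfolding ffun_def deltaA_eq using u by (intro sum.cong) (auto simp: nbhd_def)
  also have "\<dots> = card (nbhd V E u)"
    using finite_V by (simp add: sum.If_cases Int_def nbhd_sym)
  finally show ?thesis .
qed

lemma gfun_singleton_le:
  "u \<in> V \<Longrightarrow> gfun V E w {u} \<le> 3 / 2 * Wmax V E w + of_nat (maxdeg V E) / of_int (Lmax V E w)"
  using hfun_singleton_le[of u] Wv_le_Wmax[of u] ffun_singleton[of u] card_nbhd_le_maxdeg[of u] Lmax_pos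
  unfolding gfun_def by (intro add_mono divide_right_mono) auto

lemma maxdeg_ge_1: "1 \<le> maxdeg V E"
proof -
  obtain v where v: "v \<in> V" using V_nonempty by blast
  then have "0 < card (nbhd V E v)" using nbhd_nonempty finite_nbhd by (simp add: card_gt_0_iff)
  then show ?thesis using card_nbhd_le_maxdeg[OF v] by linarith
qed

lemma Wmax_nonneg: "0 \<le> Wmax V E w"
proof -
  obtain v where v: "v \<in> V" using V_nonempty by blast
  show ?thesis using Wv_nonneg Wv_le_Wmax[OF v] by (rule order.trans)
qed

end

theorem mainTheorem17:
  fixes V :: "'a set" and E :: "'a \<Rightarrow> 'a \<Rightarrow> bool" and w :: "'a \<Rightarrow> 'a \<Rightarrow> rat"
    and S Sopt :: "'a set"
  assumes "wgraph V E w"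
    and "no_isolated V E"
    and "greedy_output (gfun V E w) V S"
    and "WPPITDS V E w Sopt"
    and "\<forall>T. WPPITDS V E w T \<longrightarrow> card Sopt \<le> card T"
  shows "WPPITDS V E w S \<and>
    real (card S) \<le> (1 + ln (3/2 * real_of_int (Lmax V E w) * real_of_rat (Wmax V E w)
                              + real (maxdeg V E))) * real (card Sopt)"
proof (cases "V = {}")
  case True
  then show ?thesis
    using greedy_output_subset[OF assms(3)] assms(4) by (simp add: WPPITDS_def)
next
  case False
  interpret graph_without_isolated V E w
    using assms(1,2) False by unfold_locales
  let ?L = "rat_of_int (Lmax V E w)"
  let ?D = "3 / 2 * Wmax V E w + of_nat (maxdeg V E) / of_int (Lmax V E w)"
  have Sopt: "Sopt \<subseteq> V" "Sopt \<noteq> {}" "gfun V E w Sopt = gfun V E w V"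
    using assms(4) WPPITDS_nonempty gfun_eq_top_iff_WPPITDS by (auto simp: WPPITDS_def)
  have LD: "?L * ?D = 3 / 2 * ?L * Wmax V E w + of_nat (maxdeg V E)"
    using Lmax_pos by (simp add: field_simps)
  have "1 \<le> ?L * ?D"
    unfolding LD using Lmax_pos Wmax_nonneg maxdeg_ge_1 by (simp add: add_increasing)
  then have "real (card S) \<le> (1 + ln (of_rat (?L * ?D))) * real (card Sopt)"
    using assms(3) Sopt Lmax_pos gfun_gain_ge gfun_singleton_le
    by (intro greedy_output_card_le) (auto simp: gfun_empty)
  moreover have "WPPITDS V E w S"
    using greedy_output_eq_top[OF assms(3)] greedy_output_subset[OF assms(3)] gfun_eq_top_iff_WPPITDS
    by blast
  moreover have "real_of_rat (?L * ?D)
      = 3/2 * real_of_int (Lmax V E w) * real_of_rat (Wmax V E w) + real (maxdeg V E)"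
    unfolding LD by (simp add: of_rat_add of_rat_mult of_rat_divide)
  ultimately show ?thesis by simp
qed

end
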